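(* For any $\varepsilon>0$ (and any $\gamma>1$) there exist instances with outcomes satisfying UPRF such that: one such outcome is not $\left(\frac{3+\sqrt{17}}{2}-\varepsilon\right)$-proportionally fair; one such outcome does not satisfy $(3-\varepsilon)$-individual fairness; and one such outcome is not in the $\left(\gamma,\frac{\gamma+1}{\gamma-1}-\varepsilon\right)$-transferable core.
   Context: Let $(\mathcal X,d)$ be a metric space, $N=[n]$ a set of agents and $C$ a set of candidates located in $\mathcal X$, $k\in\mathbb N^+$; an outcome is $W\subseteq C$ with $|W|\le k$; $B(i,r)=\{x\in\mathcal X:d(i,x)\le r\}$; $d(i,W)=\min_{c\in W}d(i,c)$. UPRF: there are no $\ell\in\mathbb N$, no $N'\subseteq N$ with $|N'|\ge\ell n/k$, and no $y\in\mathbb R$ with $\max_{i,i'\in N'}d(i,i')\le y$ and $|\bigcup_{i\in N'}B(i,y)\cap W|<\ell$. $\alpha$-proportional fairness: there is no $N'\subseteq N$ with $|N'|\ge n/k$ and $c\in C\setminus W$ with $\alpha\,d(i,c)<d(i,W)$ for all $i\in N'$. $\beta$-individual fairness: $d(i,W)\le\beta\,r(i)$ for all $i\in N$, where $r(i)=\min\{r: |B(i,r)\cap N|\ge n/k\}$. $(\gamma,\alpha)$-transferable core: there is no $N'\subseteq N$ and $c\in C\setminus W$ with $|N'|\ge\gamma n/k$ and $\alpha\sum_{i\in N'}d(i,c)<\sum_{i\in N'}d(i,W)$. *)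

theory Defs
  imports Complex_Main
begin

text \<open>An instance: a metric d on the point set (type nat), n agents 0..n-1 located at
  points loc i, a finite nonempty set C of candidate points, and committee size k.\<close>

definition metric_on :: "(nat \<Rightarrow> nat \<Rightarrow> real) \<Rightarrow> bool" where
  "metric_on d \<longleftrightarrow> (\<forall>x y. d x y \<ge> 0) \<and> (\<forall>x y. d x y = 0 \<longleftrightarrow> x = y)
     \<and> (\<forall>x y. d x y = d y x) \<and> (\<forall>x y z. d x z \<le> d x y + d y z)"

definition is_instance :: "(nat \<Rightarrow> nat \<Rightarrow> real) \<Rightarrow> nat \<Rightarrow> (nat \<Rightarrow> nat) \<Rightarrow> nat set \<Rightarrow> nat \<Rightarrow> bool" where
  "is_instance d n loc C k \<longleftrightarrow> metric_on d \<and> n \<ge> 1 \<and> k \<ge> 1 \<and> finite C \<and> C \<noteq> {}"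

definition outcome :: "nat set \<Rightarrow> nat \<Rightarrow> nat set \<Rightarrow> bool" where
  "outcome C k W \<longleftrightarrow> W \<subseteq> C \<and> card W \<le> k"

text \<open>d(i,W) for agent i (W nonempty).\<close>
definition distW :: "(nat \<Rightarrow> nat \<Rightarrow> real) \<Rightarrow> (nat \<Rightarrow> nat) \<Rightarrow> nat set \<Rightarrow> nat \<Rightarrow> real" where
  "distW d loc W i = Min ((\<lambda>c. d (loc i) c) ` W)"

definition UPRF :: "(nat \<Rightarrow> nat \<Rightarrow> real) \<Rightarrow> nat \<Rightarrow> (nat \<Rightarrow> nat) \<Rightarrow> nat \<Rightarrow> nat set \<Rightarrow> bool" where
  "UPRF d n loc k W \<longleftrightarrow> \<not> (\<exists>(l::nat) N' y. N' \<subseteq> {..<n} \<and> real (card N') \<ge> real l * real n / real k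
      \<and> (\<forall>i\<in>N'. \<forall>i'\<in>N'. d (loc i) (loc i') \<le> y)
      \<and> card {c \<in> W. \<exists>i\<in>N'. d (loc i) c \<le> y} < l)"

definition prop_fair :: "real \<Rightarrow> (nat \<Rightarrow> nat \<Rightarrow> real) \<Rightarrow> nat \<Rightarrow> (nat \<Rightarrow> nat) \<Rightarrow> nat set \<Rightarrow> nat \<Rightarrow> nat set \<Rightarrow> bool" where
  "prop_fair \<alpha> d n loc C k W \<longleftrightarrow> \<not> (\<exists>N' c. N' \<subseteq> {..<n} \<and> real (card N') \<ge> real n / real k
      \<and> c \<in> C - W \<and> (\<forall>i\<in>N'. \<alpha> * d (loc i) c < distW d loc W i))"

definition rad :: "(nat \<Rightarrow> nat \<Rightarrow> real) \<Rightarrow> nat \<Rightarrow> (nat \<Rightarrow> nat) \<Rightarrow> nat \<Rightarrow> nat \<Rightarrow> real" where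
  "rad d n loc k i = Inf {r. real (card {j \<in> {..<n}. d (loc i) (loc j) \<le> r}) \<ge> real n / real k}"

definition indiv_fair :: "real \<Rightarrow> (nat \<Rightarrow> nat \<Rightarrow> real) \<Rightarrow> nat \<Rightarrow> (nat \<Rightarrow> nat) \<Rightarrow> nat \<Rightarrow> nat set \<Rightarrow> bool" where
  "indiv_fair \<beta> d n loc k W \<longleftrightarrow> (\<forall>i<n. distW d loc W i \<le> \<beta> * rad d n loc k i)"

definition transferable_core :: "real \<Rightarrow> real \<Rightarrow> (nat \<Rightarrow> nat \<Rightarrow> real) \<Rightarrow> nat \<Rightarrow> (nat \<Rightarrow> nat) \<Rightarrow> nat set \<Rightarrow> nat \<Rightarrow> nat set \<Rightarrow> bool" where
  "transferable_core \<gamma> \<alpha> d n loc C k W \<longleftrightarrow> \<not> (\<exists>N' c. N' \<subseteq> {..<n} \<and> c \<in> C - W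
      \<and> real (card N') \<ge> \<gamma> * real n / real k
      \<and> \<alpha> * (\<Sum>i\<in>N'. d (loc i) c) < (\<Sum>i\<in>N'. distW d loc W i))"

end

theory Submission
  imports Defs
begin

text \<open>
  All three instances live on spider metrics: half-lines glued at a centre.
  For proportional fairness, one agent sits at distance 1 from the centre on the leg of the
  elected candidate, which is at distance 1 + a from the centre, and two agents sit at distance
  a/2 on two further legs. All three prefer the centre by a factor min(a, 3 + 2/a), which is
  largest at the root a = (3 + sqrt 17)/2 of a * a = 3a + 2.
  For individual fairness, agents sit at 0, 1, 2 on the line and the winner at 4: the middle
  agent has radius 1 and distance 3.
  With k = 1, UPRF only asks that the set of all agents sees a winner within its diameter.
  For the transferable core, N + 1 blocks of N agents sit at the centre and at distance 1 on
  N legs, and the N winners at distance 2 on these legs. A coalition of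
  M = \<lceil>\<gamma>(N + 1)\<rceil> agents containing the central block pays M - N at the centre against
  M + N at the winners, a ratio tending to (\<gamma> + 1)/(\<gamma> - 1). A group meeting two blocks has
  diameter at least 1, so it sees the winner of every non-central leg it meets; this is as many
  winners as UPRF demands of a group of its size.
\<close>

definition spider_dist :: "(nat \<Rightarrow> nat) \<Rightarrow> (nat \<Rightarrow> real) \<Rightarrow> nat \<Rightarrow> nat \<Rightarrow> real" where
  "spider_dist leg height u v =
     (if u = v then 0 else if leg u = leg v then \<bar>height u - height v\<bar> else height u + height v)"

lemma metric_on_spider_dist:
  assumes height_nonneg: "\<And>u. height u \<ge> 0"
    and leg_height_inj: "\<And>u v. leg u = leg v \<Longrightarrow> height u = height v \<Longrightarrow> u = v"
    and unique_centre: "\<And>u v. height u = 0 \<Longrightarrow> height v = 0 \<Longrightarrow> u = v"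
  shows "metric_on (spider_dist leg height)"
proof -
  let ?d = "spider_dist leg height"
  have height_diff_le: "\<bar>height u - height v\<bar> \<le> ?d u v" for u v
    using height_nonneg[of u] height_nonneg[of v] by (auto simp: spider_dist_def)
  have other_leg: "?d u v = height u + height v" if "leg u \<noteq> leg v" for u v
    using that by (auto simp: spider_dist_def)
  have nonneg: "?d x y \<ge> 0" for x y
    using order_trans[OF abs_ge_zero height_diff_le] .
  have triangle: "?d x z \<le> ?d x y + ?d y z" for x y z
  proof (cases "x = z \<or> leg x = leg z")
    case True
    then have "?d x z \<le> \<bar>height x - height z\<bar>"
      by (auto simp: spider_dist_def)
    then show ?thesis
      using height_diff_le[of x y] height_diff_le[of y z] by linarith
  next
    case False
    then have "leg x \<noteq> leg y \<or> leg y \<noteq> leg z"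
      by auto
    then show ?thesis
      using False other_leg height_diff_le[of x y] height_diff_le[of y z]
        height_nonneg[of x] height_nonneg[of y] height_nonneg[of z] by fastforce
  qed
  have zero: "?d x y = 0 \<longleftrightarrow> x = y" for x y
    using height_nonneg[of x] height_nonneg[of y] leg_height_inj[of x y] unique_centre[of x y]
    by (auto simp: spider_dist_def)
  have sym: "?d x y = ?d y x" for x y
    by (simp add: spider_dist_def abs_minus_commute)
  show ?thesis
    unfolding metric_on_def using nonneg zero sym triangle by blast
qed

lemma distW_singleton [simp]: "distW d loc {c} i = d (loc i) c"
  by (simp add: distW_def)

lemma UPRF_committee_size_oneI:
  assumes "finite W"
    and covered: "\<And>y. \<forall>i<n. \<forall>j<n. d (loc i) (loc j) \<le> y \<Longrightarrow> \<exists>c\<in>W. \<exists>i<n. d (loc i) c \<le> y"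
  shows "UPRF d n loc 1 W"
  unfolding UPRF_def
proof
  assume "\<exists>(l::nat) N' y. N' \<subseteq> {..<n} \<and> real (card N') \<ge> real l * real n / real 1
      \<and> (\<forall>i\<in>N'. \<forall>i'\<in>N'. d (loc i) (loc i') \<le> y)
      \<and> card {c \<in> W. \<exists>i\<in>N'. d (loc i) c \<le> y} < l"
  then obtain l N' y where N': "N' \<subseteq> {..<n}" and large: "l * n \<le> card N'"
    and diam: "\<forall>i\<in>N'. \<forall>j\<in>N'. d (loc i) (loc j) \<le> y"
    and few: "card {c \<in> W. \<exists>i\<in>N'. d (loc i) c \<le> y} < l"
    by (auto simp flip: of_nat_mult)
  have small: "card N' \<le> n"
    using N' by (metis card_lessThan card_mono finite_lessThan)
  have "n \<le> card N'"
  proof -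
    have "1 * n \<le> l * n"
      using few by (intro mult_le_mono1) simp
    then show ?thesis
      using large by linarith
  qed
  with small have "N' = {..<n}"
    using N' by (intro card_subset_eq) auto
  then obtain c i where "c \<in> W" "i \<in> N'" "d (loc i) c \<le> y"
    using covered diam by blast
  then have "card {c \<in> W. \<exists>i\<in>N'. d (loc i) c \<le> y} > 0"
    using \<open>finite W\<close> by (auto simp: card_gt_0_iff)
  then have "l \<ge> 2"
    using few by linarith
  then have "2 * n \<le> l * n"
    by (rule mult_le_mono1)
  then have "n = 0"
    using large small by linarith
  then show False
    using \<open>i \<in> N'\<close> N' by auto
qed

lemma rad_committee_size_one:
  assumes "n \<ge> 1"
  shows "rad d n loc 1 i = Max ((\<lambda>j. d (loc i) (loc j)) ` {..<n})"
proof -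
  let ?R = "Max ((\<lambda>j. d (loc i) (loc j)) ` {..<n})"
  have "real (card {j \<in> {..<n}. d (loc i) (loc j) \<le> r}) \<ge> real n / real 1 \<longleftrightarrow> ?R \<le> r" for r
  proof -
    let ?B = "{j \<in> {..<n}. d (loc i) (loc j) \<le> r}"
    have "card ?B \<ge> n \<longleftrightarrow> ?B = {..<n}"
      using card_seteq[of "{..<n}" ?B] by fastforce
    also have "\<dots> \<longleftrightarrow> (\<forall>j<n. d (loc i) (loc j) \<le> r)"
      by blast
    also have "\<dots> \<longleftrightarrow> ?R \<le> r"
      using assms by (subst Max_le_iff) (auto simp: lessThan_empty_iff)
    finally show ?thesis
      by simp
  qed
  then have "{r. real (card {j \<in> {..<n}. d (loc i) (loc j) \<le> r}) \<ge> real n / real 1} = {?R..}"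
    by auto
  then show ?thesis
    unfolding rad_def by simp
qed

lemma card_le_mult_card_image_div:
  fixes A :: "nat set"
  assumes "finite A" and "N > 0"
  shows "card A \<le> N * card ((\<lambda>i. i div N) ` A)"
proof -
  let ?H = "(\<lambda>i. i div N) ` A"
  have "A \<subseteq> (\<Union>t\<in>?H. {t * N..<t * N + N})"
  proof
    fix i
    assume "i \<in> A"
    moreover have "i div N * N \<le> i" and "i < i div N * N + N"
      using div_mult_mod_eq[of i N] mod_less_divisor[OF \<open>N > 0\<close>, of i] by linarith+
    ultimately show "i \<in> (\<Union>t\<in>?H. {t * N..<t * N + N})"
      by (intro UN_I[OF imageI]) auto
  qed
  then have "card A \<le> card (\<Union>t\<in>?H. {t * N..<t * N + N})"
    using assms by (intro card_mono) auto
  also have "\<dots> \<le> (\<Sum>t\<in>?H. card {t * N..<t * N + N})"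
    using assms by (intro card_UN_le) auto
  also have "\<dots> = N * card ?H"
    by simp
  finally show ?thesis .
qed

lemma transferable_core_ratio_gap:
  fixes \<gamma> \<epsilon> m x :: real
  assumes "\<gamma> > 1" and "\<epsilon> > 0" and "x > 0" and "x \<le> m" and "m < \<gamma> * (x + 1) + 1"
    and large: "2 * (\<gamma> + 1) \<le> \<epsilon> * (\<gamma> - 1)\<^sup>2 * x"
  shows "((\<gamma> + 1) / (\<gamma> - 1) - \<epsilon>) * (m - x) < m + x"
proof -
  define q where "q = \<gamma> - 1"
  define b where "b = m - x"
  have "q > 0" "b \<ge> 0" "b < q * x + q + 2"
    using assms unfolding q_def b_def by (simp_all add: algebra_simps)
  have "\<epsilon> * q * (q + 2) > 0"
    using \<open>q > 0\<close> assms(2) by simp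
  have large_q: "2 * (q + 2) \<le> \<epsilon> * q\<^sup>2 * x"
    using large unfolding q_def by (simp add: algebra_simps)
  have "2 * b < 2 * q * x + \<epsilon> * q * b"
  proof (cases "\<epsilon> * q \<ge> 2")
    case True
    then have "2 * b \<le> \<epsilon> * q * b"
      using \<open>b \<ge> 0\<close> by (intro mult_right_mono) auto
    moreover have "0 < 2 * q * x"
      using \<open>q > 0\<close> \<open>x > 0\<close> by simp
    ultimately show ?thesis
      by linarith
  next
    case False
    then have "(2 - \<epsilon> * q) * b \<le> (2 - \<epsilon> * q) * (q * x + q + 2)"
      using \<open>b < q * x + q + 2\<close> by (intro mult_left_mono) auto
    also have "\<dots> = 2 * q * x + (2 * (q + 2) - \<epsilon> * q\<^sup>2 * x) - \<epsilon> * q * (q + 2)"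
      by (simp add: algebra_simps power2_eq_square)
    also have "\<dots> < 2 * q * x"
      using large_q \<open>\<epsilon> * q * (q + 2) > 0\<close> by linarith
    finally show ?thesis
      by (simp add: algebra_simps)
  qed
  then have "(q + 2 - \<epsilon> * q) * b < q * (m + x)"
    unfolding b_def by (simp add: algebra_simps)
  then show ?thesis
    using \<open>q > 0\<close> unfolding q_def b_def by (simp add: field_simps)
qed

text \<open>The centre is 0; leg 1 carries 1 and 2 at heights 1 and 1 + a, legs 2 and 3 carry 3 and 4
  at height a/2 (points beyond 4 are unused). The agents sit at 1, 3, 4, the candidates are 0
  and the elected 2.\<close>

definition pf_leg :: "nat \<Rightarrow> nat" where
  "pf_leg v = (if v = 2 then 1 else if v \<le> 1 then v else v - 1)"

definition pf_height :: "real \<Rightarrow> nat \<Rightarrow> real" where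
  "pf_height a v =
     (if v = 0 then 0 else if v = 1 then 1 else if v = 2 then 1 + a else if v \<le> 4 then a / 2 else 1)"

definition pf_dist :: "real \<Rightarrow> nat \<Rightarrow> nat \<Rightarrow> real" where
  "pf_dist a = spider_dist pf_leg (pf_height a)"

definition pf_loc :: "nat \<Rightarrow> nat" where
  "pf_loc i = (if i = 0 then 1 else if i = 1 then 3 else 4)"

lemma metric_on_pf_dist:
  assumes "a > 0"
  shows "metric_on (pf_dist a)"
  unfolding pf_dist_def
proof (rule metric_on_spider_dist)
  fix u
  show "pf_height a u \<ge> 0"
    using assms by (simp add: pf_height_def)
next
  fix u v
  assume "pf_leg u = pf_leg v" and "pf_height a u = pf_height a v"
  moreover from \<open>pf_leg u = pf_leg v\<close> have "u = v \<or> (u = 1 \<and> v = 2) \<or> (u = 2 \<and> v = 1)"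
    unfolding pf_leg_def by (auto split: if_splits)
  ultimately show "u = v"
    using assms unfolding pf_height_def by auto
next
  fix u v
  have "pf_height a w = 0 \<longleftrightarrow> w = 0" for w
    using assms by (simp add: pf_height_def)
  then show "pf_height a u = 0 \<Longrightarrow> pf_height a v = 0 \<Longrightarrow> u = v"
    by simp
qed

lemma pf_dist_agents:
  assumes "a > 0"
  shows "pf_dist a (pf_loc i) 0 = (if i = 0 then 1 else a / 2)"
    and "pf_dist a (pf_loc i) 2 = (if i = 0 then a else 3 * a / 2 + 1)"
proof -
  have "pf_loc i \<in> {1, 3, 4}" "i = 0 \<longleftrightarrow> pf_loc i = 1"
    by (simp_all add: pf_loc_def)
  then show "pf_dist a (pf_loc i) 0 = (if i = 0 then 1 else a / 2)"
    and "pf_dist a (pf_loc i) 2 = (if i = 0 then a else 3 * a / 2 + 1)"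
    using assms by (auto simp: pf_dist_def spider_dist_def pf_leg_def pf_height_def)
qed

lemma UPRF_pf:
  assumes "a > 0"
  shows "UPRF (pf_dist a) 3 pf_loc 1 {2}"
proof (rule UPRF_committee_size_oneI)
  fix y
  assume "\<forall>i<3. \<forall>j<3. pf_dist a (pf_loc i) (pf_loc j) \<le> y"
  then have "pf_dist a (pf_loc 1) (pf_loc 2) \<le> y"
    by simp
  then have "pf_dist a (pf_loc 0) 2 \<le> y"
    using assms by (simp add: pf_dist_def spider_dist_def pf_leg_def pf_height_def pf_loc_def)
  moreover have "(0::nat) < 3"
    by simp
  ultimately show "\<exists>c\<in>{2}. \<exists>i<3. pf_dist a (pf_loc i) c \<le> y"
    by blast
qed simp

lemma not_prop_fair_pf:
  assumes "a > 0" and "\<alpha> < a" and "\<alpha> * a < 3 * a + 2"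
  shows "\<not> prop_fair \<alpha> (pf_dist a) 3 pf_loc {0, 2} 1 {2}"
proof -
  have "\<forall>i\<in>{..<3}. \<alpha> * pf_dist a (pf_loc i) 0 < distW (pf_dist a) pf_loc {2} i"
    using assms by (simp add: pf_dist_agents)
  moreover have "real (card {..<3::nat}) \<ge> real 3 / real 1" "(0::nat) \<in> {0, 2} - {2}"
    by simp_all
  ultimately show ?thesis
    unfolding prop_fair_def by blast
qed

lemma exists_UPRF_not_prop_fair:
  fixes \<epsilon> :: real
  assumes "\<epsilon> > 0"
  shows "\<exists>d n loc C k W. is_instance d n loc C k \<and> outcome C k W \<and> W \<noteq> {} \<and> UPRF d n loc k W
            \<and> \<not> prop_fair ((3 + sqrt 17) / 2 - \<epsilon>) d n loc C k W"
proof -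
  define a :: real where "a = (3 + sqrt 17) / 2"
  have "a > 0"
    unfolding a_def by (simp add: add_pos_nonneg)
  have "a * a = 3 * a + 2"
    unfolding a_def by (simp add: field_simps)
  then have "(a - \<epsilon>) * a < 3 * a + 2"
    using assms \<open>a > 0\<close> by (simp add: left_diff_distrib)
  then have "\<not> prop_fair (a - \<epsilon>) (pf_dist a) 3 pf_loc {0, 2} 1 {2}"
    using assms \<open>a > 0\<close> by (intro not_prop_fair_pf) auto
  moreover have "is_instance (pf_dist a) 3 pf_loc {0, 2} 1"
    using metric_on_pf_dist[OF \<open>a > 0\<close>] by (simp add: is_instance_def)
  moreover have "outcome {0, 2} 1 {2}"
    by (simp add: outcome_def)
  ultimately show ?thesis
    using UPRF_pf[OF \<open>a > 0\<close>] unfolding a_def by blast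
qed

lemma exists_UPRF_not_indiv_fair:
  fixes \<epsilon> :: real
  assumes "\<epsilon> > 0"
  shows "\<exists>d n loc C k W. is_instance d n loc C k \<and> outcome C k W \<and> W \<noteq> {} \<and> UPRF d n loc k W
            \<and> \<not> indiv_fair (3 - \<epsilon>) d n loc k W"
proof -
  define d :: "nat \<Rightarrow> nat \<Rightarrow> real" where "d x y = \<bar>real x - real y\<bar>" for x y
  have "metric_on d"
    unfolding metric_on_def d_def by auto
  then have "is_instance d 3 id {4} 1"
    by (simp add: is_instance_def)
  moreover have "UPRF d 3 id 1 {4}"
  proof (rule UPRF_committee_size_oneI)
    fix y assume "\<forall>i<3. \<forall>j<3. d (id i) (id j) \<le> y"
    then have "d 2 0 \<le> y"
      by simp
    then have "d (id 2) 4 \<le> y"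
      by (simp add: d_def)
    moreover have "(2::nat) < 3"
      by simp
    ultimately show "\<exists>c\<in>{4}. \<exists>i<3. d (id i) c \<le> y"
      by blast
  qed simp
  moreover have "\<not> indiv_fair (3 - \<epsilon>) d 3 id 1 {4}"
  proof -
    have "rad d 3 id 1 1 = 1"
      by (subst rad_committee_size_one) (simp_all add: lessThan_nat_numeral d_def)
    moreover have "distW d id {4} 1 = 3"
      by (simp add: d_def)
    ultimately have "\<not> distW d id {4} 1 \<le> (3 - \<epsilon>) * rad d 3 id 1 1"
      using assms by simp
    moreover have "(1::nat) < 3"
      by simp
    ultimately show ?thesis
      unfolding indiv_fair_def by blast
  qed
  moreover have "outcome {4} 1 {4}"
    by (simp add: outcome_def)
  ultimately show ?thesis
    by blast
qed

text \<open>Leg t \<ge> 1 carries 2t - 1 at height 1 and the winner 2t at height 2. Agent i sits in block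
  i div N: block 0 at the centre 0, block t at 2t - 1.\<close>

definition tc_leg :: "nat \<Rightarrow> nat" where
  "tc_leg v = (v + 1) div 2"

definition tc_height :: "nat \<Rightarrow> real" where
  "tc_height v = (if v = 0 then 0 else if odd v then 1 else 2)"

definition tc_dist :: "nat \<Rightarrow> nat \<Rightarrow> real" where
  "tc_dist = spider_dist tc_leg tc_height"

definition tc_point :: "nat \<Rightarrow> nat" where
  "tc_point t = (if t = 0 then 0 else 2 * t - 1)"

definition tc_loc :: "nat \<Rightarrow> nat \<Rightarrow> nat" where
  "tc_loc N i = tc_point (i div N)"

definition tc_winners :: "nat \<Rightarrow> nat set" where
  "tc_winners N = (\<lambda>t. 2 * t) ` {1..N}"

lemma metric_on_tc_dist: "metric_on tc_dist"
  unfolding tc_dist_def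
proof (rule metric_on_spider_dist)
  fix u
  show "tc_height u \<ge> 0"
    by (simp add: tc_height_def)
next
  fix u v
  assume "tc_leg u = tc_leg v" and "tc_height u = tc_height v"
  then have "(u + 1) div 2 = (v + 1) div 2" and "(u + 1) mod 2 = (v + 1) mod 2"
    unfolding tc_leg_def tc_height_def by (auto simp: mod2_eq_if split: if_splits)
  then have "u + 1 = v + 1"
    using div_mult_mod_eq[of "u + 1" 2] div_mult_mod_eq[of "v + 1" 2] by linarith
  then show "u = v"
    by simp
next
  fix u v
  assume "tc_height u = 0" and "tc_height v = 0"
  then show "u = v"
    unfolding tc_height_def by (auto split: if_splits)
qed

lemma tc_dist_points:
  "tc_dist (tc_point s) (tc_point t) = (if s = t then 0 else if s = 0 \<or> t = 0 then 1 else 2)"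
  unfolding tc_dist_def spider_dist_def tc_point_def tc_leg_def tc_height_def by auto

lemma tc_dist_point_winner:
  assumes "u \<ge> 1"
  shows "tc_dist (tc_point s) (2 * u) = (if s = 0 then 2 else if s = u then 1 else 3)"
  using assms unfolding tc_dist_def spider_dist_def tc_point_def tc_leg_def tc_height_def by auto

lemma tc_block_le:
  fixes i N :: nat
  assumes "i < N * (N + 1)"
  shows "i div N \<le> N"
  using less_mult_imp_div_less[of i "N + 1" N] assms by (simp add: mult.commute)

lemma card_blocks_le_covered_winners:
  assumes N': "N' \<subseteq> {..<N * (N + 1)}"
    and diam: "\<forall>i\<in>N'. \<forall>j\<in>N'. tc_dist (tc_loc N i) (tc_loc N j) \<le> y"
  shows "card ((\<lambda>i. i div N) ` N') \<le> card {c \<in> tc_winners N. \<exists>i\<in>N'. tc_dist (tc_loc N i) c \<le> y} + 1"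
    (is "card ?H \<le> card ?Cov + 1")
proof (cases "card ?H \<le> 1")
  case False
  have "finite ?H"
    using N' finite_subset by blast
  then obtain i j where "i \<in> N'" "j \<in> N'" "i div N \<noteq> j div N"
    using False by (auto simp: card_le_Suc0_iff_eq)
  then have "1 \<le> tc_dist (tc_loc N i) (tc_loc N j)"
    by (simp add: tc_loc_def tc_dist_points)
  also have "\<dots> \<le> y"
    using diam \<open>i \<in> N'\<close> \<open>j \<in> N'\<close> by blast
  finally have "y \<ge> 1" .
  have "(\<lambda>t. 2 * t) ` (?H - {0}) \<subseteq> ?Cov"
  proof
    fix w
    assume "w \<in> (\<lambda>t. 2 * t) ` (?H - {0})"
    then obtain i where "i \<in> N'" "i div N \<noteq> 0" "w = 2 * (i div N)"
      by auto
    moreover have "i div N \<le> N"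
      using \<open>i \<in> N'\<close> N' tc_block_le by auto
    ultimately have "w \<in> tc_winners N"
      unfolding tc_winners_def by auto
    moreover have "tc_dist (tc_loc N i) w \<le> y"
      using \<open>y \<ge> 1\<close> \<open>i div N \<noteq> 0\<close> \<open>w = 2 * (i div N)\<close>
      by (simp add: tc_dist_point_winner tc_loc_def)
    ultimately show "w \<in> ?Cov"
      using \<open>i \<in> N'\<close> by blast
  qed
  then have "card (?H - {0}) \<le> card ?Cov"
    using card_inj_on_le[of "\<lambda>t. 2 * t" "?H - {0}" ?Cov] by (auto simp: inj_on_def tc_winners_def)
  then show ?thesis
    using \<open>finite ?H\<close> by (simp add: card_Diff_singleton_if split: if_splits)
qed simp

lemma UPRF_tc:
  assumes "N \<ge> 1"
  shows "UPRF tc_dist (N * (N + 1)) (tc_loc N) N (tc_winners N)"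
  unfolding UPRF_def
proof
  let ?Cov = "\<lambda>N' y. {c \<in> tc_winners N. \<exists>i\<in>N'. tc_dist (tc_loc N i) c \<le> y}"
  assume "\<exists>(l::nat) N' y. N' \<subseteq> {..<N * (N + 1)}
      \<and> real (card N') \<ge> real l * real (N * (N + 1)) / real N
      \<and> (\<forall>i\<in>N'. \<forall>i'\<in>N'. tc_dist (tc_loc N i) (tc_loc N i') \<le> y)
      \<and> card (?Cov N' y) < l"
  then obtain l N' y where N': "N' \<subseteq> {..<N * (N + 1)}"
    and large: "real (card N') \<ge> real l * real (N * (N + 1)) / real N"
    and diam: "\<forall>i\<in>N'. \<forall>j\<in>N'. tc_dist (tc_loc N i) (tc_loc N j) \<le> y"
    and few: "card (?Cov N' y) < l"
    by blast
  have "real (l * (N + 1)) = real l * real (N * (N + 1)) / real N"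
    using assms by (simp add: field_simps)
  then have "l * (N + 1) \<le> card N'"
    using large by linarith
  also have "\<dots> \<le> N * card ((\<lambda>i. i div N) ` N')"
    using N' assms finite_subset by (intro card_le_mult_card_image_div) auto
  also have "\<dots> \<le> N * (card (?Cov N' y) + 1)"
    using card_blocks_le_covered_winners[OF N' diam] by (rule mult_le_mono2)
  also have "\<dots> \<le> N * l"
    using few by (intro mult_le_mono2) simp
  finally show False
    using few by simp
qed

lemma distW_tc:
  assumes "N \<ge> 1" and "i < N * (N + 1)"
  shows "distW tc_dist (tc_loc N) (tc_winners N) i = (if i < N then 2 else 1)"
proof -
  define t where "t = i div N"
  have "t \<le> N"
    unfolding t_def using assms(2) by (rule tc_block_le)
  have "t = 0 \<longleftrightarrow> i < N"
    using assms(1) unfolding t_def by (simp add: div_eq_0_iff)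
  have dists: "(\<lambda>c. tc_dist (tc_loc N i) c) ` tc_winners N = (\<lambda>u. tc_dist (tc_point t) (2 * u)) ` {1..N}"
    unfolding tc_winners_def tc_loc_def t_def by (simp add: image_image)
  have "Min ((\<lambda>u. tc_dist (tc_point t) (2 * u)) ` {1..N}) = (if t = 0 then 2 else 1)"
  proof (rule Min_eqI)
    show "(if t = 0 then 2 else 1) \<in> (\<lambda>u. tc_dist (tc_point t) (2 * u)) ` {1..N}"
      using assms \<open>t \<le> N\<close> tc_dist_point_winner
      by (intro image_eqI[of _ _ "if t = 0 then 1 else t"]) auto
  qed (auto simp: tc_dist_point_winner)
  then show ?thesis
    unfolding distW_def dists using \<open>t = 0 \<longleftrightarrow> i < N\<close> by simp
qed

lemma tc_dist_loc_centre:
  assumes "N \<ge> 1"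
  shows "tc_dist (tc_loc N i) 0 = (if i < N then 0 else 1)"
  using assms tc_dist_points[of "i div N" 0] by (simp add: tc_loc_def tc_point_def div_eq_0_iff)

lemma sum_tc_coalition:
  assumes "N \<ge> 1" and "N \<le> M" and "M \<le> N * (N + 1)"
  shows "(\<Sum>i<M. tc_dist (tc_loc N i) 0) = real M - real N"
    and "(\<Sum>i<M. distW tc_dist (tc_loc N) (tc_winners N) i) = real M + real N"
proof -
  have blocks: "{..<M} \<inter> {i. i < N} = {..<N}" "{..<M} \<inter> - {i. i < N} = {N..<M}"
    using assms by auto
  have "(\<Sum>i<M. tc_dist (tc_loc N i) 0) = (\<Sum>i<M. if i < N then 0 else 1)"
    using assms by (simp add: tc_dist_loc_centre)
  then show "(\<Sum>i<M. tc_dist (tc_loc N i) 0) = real M - real N"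
    using assms by (simp add: sum.If_cases blocks of_nat_diff)
  have "(\<Sum>i<M. distW tc_dist (tc_loc N) (tc_winners N) i) = (\<Sum>i<M. if i < N then 2 else 1)"
    using assms by (intro sum.cong) (simp_all add: distW_tc)
  then show "(\<Sum>i<M. distW tc_dist (tc_loc N) (tc_winners N) i) = real M + real N"
    using assms by (simp add: sum.If_cases blocks of_nat_diff)
qed

lemma not_transferable_core_tc:
  fixes \<gamma> \<alpha> :: real
  assumes "N \<ge> 1" and "N \<le> M" and "M \<le> N * (N + 1)" and "\<gamma> * (N + 1) \<le> M"
    and "\<alpha> * (real M - real N) < real M + real N"
  shows "\<not> transferable_core \<gamma> \<alpha> tc_dist (N * (N + 1)) (tc_loc N) (insert 0 (tc_winners N)) N
           (tc_winners N)"
proof -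
  have "\<gamma> * real (N * (N + 1)) / real N = \<gamma> * (N + 1)"
    using assms by (simp add: field_simps)
  then have "\<gamma> * real (N * (N + 1)) / real N \<le> real (card {..<M})"
    using assms by (simp add: add.commute)
  moreover have "(0::nat) \<in> insert 0 (tc_winners N) - tc_winners N"
    by (auto simp: tc_winners_def)
  moreover have "\<alpha> * (\<Sum>i<M. tc_dist (tc_loc N i) 0) < (\<Sum>i<M. distW tc_dist (tc_loc N) (tc_winners N) i)"
    using assms by (simp add: sum_tc_coalition)
  moreover have "{..<M} \<subseteq> {..<N * (N + 1)}"
    using assms by auto
  ultimately show ?thesis
    unfolding transferable_core_def by blast
qed

lemma exists_UPRF_not_transferable_core:
  fixes \<epsilon> \<gamma> :: real
  assumes "\<epsilon> > 0" and "\<gamma> > 1"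
  shows "\<exists>d n loc C k W. is_instance d n loc C k \<and> outcome C k W \<and> W \<noteq> {} \<and> UPRF d n loc k W
            \<and> \<not> transferable_core \<gamma> ((\<gamma> + 1) / (\<gamma> - 1) - \<epsilon>) d n loc C k W"
proof -
  obtain N :: nat where N: "max \<gamma> (2 * (\<gamma> + 1) / (\<epsilon> * (\<gamma> - 1)\<^sup>2)) \<le> N"
    using real_arch_simple by blast
  then have "\<gamma> \<le> N" and "N \<ge> 1"
    using assms by auto
  have large: "2 * (\<gamma> + 1) \<le> \<epsilon> * (\<gamma> - 1)\<^sup>2 * N"
    using N assms by (simp add: pos_divide_le_eq mult.commute)
  define M where "M = nat \<lceil>\<gamma> * (N + 1)\<rceil>"
  have "real M = of_int \<lceil>\<gamma> * (N + 1)\<rceil>"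
    unfolding M_def using assms by (simp add: of_nat_nat)
  then have M_lower: "\<gamma> * (N + 1) \<le> M" and M_upper: "M < \<gamma> * (N + 1) + 1"
    using ceiling_correct[of "\<gamma> * (N + 1)"] by linarith+
  have "0 \<le> (\<gamma> - 1) * (N + 1)"
    using assms by simp
  then have "real N \<le> real M"
    using M_lower by (simp add: algebra_simps)
  then have "N \<le> M"
    by simp
  have "\<gamma> * (N + 1) \<le> N * (N + 1)"
    using mult_right_mono[OF \<open>\<gamma> \<le> N\<close>, of "real (N + 1)"] by (simp only: of_nat_mult)
  then have "M \<le> N * (N + 1)"
    unfolding M_def by (simp add: nat_le_iff ceiling_le_iff)
  have "((\<gamma> + 1) / (\<gamma> - 1) - \<epsilon>) * (real M - real N) < real M + real N"
    using assms \<open>N \<ge> 1\<close> \<open>N \<le> M\<close> M_upper large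
    by (intro transferable_core_ratio_gap[of \<gamma> \<epsilon> "real N" "real M"]) (simp_all add: add.commute)
  then have "\<not> transferable_core \<gamma> ((\<gamma> + 1) / (\<gamma> - 1) - \<epsilon>) tc_dist (N * (N + 1)) (tc_loc N)
      (insert 0 (tc_winners N)) N (tc_winners N)"
    using \<open>N \<ge> 1\<close> \<open>N \<le> M\<close> \<open>M \<le> N * (N + 1)\<close> M_lower by (intro not_transferable_core_tc) (auto simp: add.commute)
  moreover have "is_instance tc_dist (N * (N + 1)) (tc_loc N) (insert 0 (tc_winners N)) N"
    using metric_on_tc_dist \<open>N \<ge> 1\<close> by (simp add: is_instance_def tc_winners_def)
  moreover have "outcome (insert 0 (tc_winners N)) N (tc_winners N)"
    using card_image_le[of "{1..N}" "\<lambda>t. 2 * t"] by (auto simp: outcome_def tc_winners_def)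
  moreover have "tc_winners N \<noteq> {}"
    using \<open>N \<ge> 1\<close> by (simp add: tc_winners_def)
  ultimately show ?thesis
    using UPRF_tc[OF \<open>N \<ge> 1\<close>] by blast
qed

theorem theorem7:
  fixes \<epsilon> \<gamma> :: real
  assumes "\<epsilon> > 0" and "\<gamma> > 1"
  shows "(\<exists>d n loc C k W. is_instance d n loc C k \<and> outcome C k W \<and> W \<noteq> {} \<and> UPRF d n loc k W
            \<and> \<not> prop_fair ((3 + sqrt 17) / 2 - \<epsilon>) d n loc C k W)
       \<and> (\<exists>d n loc C k W. is_instance d n loc C k \<and> outcome C k W \<and> W \<noteq> {} \<and> UPRF d n loc k W
            \<and> \<not> indiv_fair (3 - \<epsilon>) d n loc k W)
       \<and> (\<exists>d n loc C k W. is_instance d n loc C k \<and> outcome C k W \<and> W \<noteq> {} \<and> UPRF d n loc k W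
            \<and> \<not> transferable_core \<gamma> ((\<gamma> + 1) / (\<gamma> - 1) - \<epsilon>) d n loc C k W)"
  using assms
  by (intro conjI exists_UPRF_not_prop_fair exists_UPRF_not_indiv_fair
      exists_UPRF_not_transferable_core)

end
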